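(* Let $A$ be a finite-dimensional associative algebra over $K=\mathbb{R}$ or $\mathbb{C}$, let $\{\cdot,\cdot\}$ be a quadratic pre-Poisson bracket on $A$ (not necessarily compatible with the multiplication), let $\delta\colon\mathrm{Symm}(A\otimes A)\to A\wedge A\subset A\otimes A$ be the dual of the map $\delta^*\colon A^*\wedge A^*\to\mathrm{Sym}^2(A^* )$ encoding the bracket, and let $\tilde\delta\colon A\otimes A\to A\otimes A$ be an arbitrary linear extension of $\delta$. Then for every fully symmetric tensor $X\in A\otimes A\otimes A$ the value $[[\tilde\delta,\tilde\delta]](X)$ depends only on $\delta$ (not on the chosen extension), and the bracket satisfies the Jacobi identity if and only if $[[\tilde\delta,\tilde\delta]](X)=0$ for every fully symmetric $X\in A\otimes A\otimes A$.
   Context: A pre-Poisson bracket on $A$ is a bilinear skew-symmetric map on $C^\infty(A)$ satisfying the Leibniz rule; it is quadratic if the bracket of two linear functions (elements of $A^*$) is a homogeneous quadratic function (element of $\mathrm{Sym}^2(A^* )$); it is then encoded by $\delta^*(\xi\wedge\eta)=\{\xi,\eta\}$, and $\delta$ is the dual map under the natural identifications of $\mathrm{Symm}(A\otimes A)$ with $(\mathrm{Sym}^2A^* )^*$ and $A\wedge A$ with $(A^*\wedge A^* )^*$. For a linear operator $P$ on $V\otimes V$, $P^{12}$ denotes the operator on $V\otimes V\otimes V$ acting as $P$ on the first two factors and as the identity on the third; $P^{13},P^{23}$ are defined similarly. The Schouten bracket is the operator $[[P,P]]=[P^{12},P^{13}]+[P^{12},P^{23}]+[P^{13},P^{23}]$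 on $V^{\otimes3}$, where $[\cdot,\cdot]$ is the commutator of operators. *)

theory Defs
  imports Complex_Main
begin

text \<open>Coordinates: the algebra A is K^n with basis e_i indexed by a finite type 'n.
  Elements of A: 'n => 'k; of A (x) A: 'n * 'n => 'k; of A (x) A (x) A: 'n * 'n * 'n => 'k.\<close>

definition assoc_alg :: "('n::finite \<Rightarrow> 'n \<Rightarrow> 'n \<Rightarrow> 'k::comm_ring_1) \<Rightarrow> bool" where
  "assoc_alg mu \<longleftrightarrow> (\<forall>i j k q. (\<Sum>p\<in>UNIV. mu i j p * mu p k q) = (\<Sum>p\<in>UNIV. mu j k p * mu i p q))"

definition op_apply :: "('n::finite \<times> 'n \<Rightarrow> 'n \<times> 'n \<Rightarrow> 'k::comm_ring_1) \<Rightarrow> ('n \<times> 'n \<Rightarrow> 'k) \<Rightarrow> ('n \<times> 'n \<Rightarrow> 'k)" where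
  "op_apply P t = (\<lambda>p. \<Sum>q\<in>UNIV. P p q * t q)"

definition sym2 :: "('n \<times> 'n \<Rightarrow> 'k) \<Rightarrow> bool" where
  "sym2 t \<longleftrightarrow> (\<forall>i j. t (i, j) = t (j, i))"

definition sym3 :: "('n \<times> 'n \<times> 'n \<Rightarrow> 'k) \<Rightarrow> bool" where
  "sym3 X \<longleftrightarrow> (\<forall>i j k. X (i, j, k) = X (j, i, k) \<and> X (i, j, k) = X (i, k, j) \<and> X (i, j, k) = X (k, j, i)
                        \<and> X (i, j, k) = X (j, k, i) \<and> X (i, j, k) = X (k, i, j))"

definition P12 :: "('n::finite \<times> 'n \<Rightarrow> 'n \<times> 'n \<Rightarrow> 'k::comm_ring_1) \<Rightarrow> ('n \<times> 'n \<times> 'n \<Rightarrow> 'k) \<Rightarrow> ('n \<times> 'n \<times> 'n \<Rightarrow> 'k)" where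
  "P12 P X = (\<lambda>(i, j, m). \<Sum>(k, l)\<in>UNIV. P (i, j) (k, l) * X (k, l, m))"

definition P13 :: "('n::finite \<times> 'n \<Rightarrow> 'n \<times> 'n \<Rightarrow> 'k::comm_ring_1) \<Rightarrow> ('n \<times> 'n \<times> 'n \<Rightarrow> 'k) \<Rightarrow> ('n \<times> 'n \<times> 'n \<Rightarrow> 'k)" where
  "P13 P X = (\<lambda>(i, j, m). \<Sum>(k, l)\<in>UNIV. P (i, m) (k, l) * X (k, j, l))"

definition P23 :: "('n::finite \<times> 'n \<Rightarrow> 'n \<times> 'n \<Rightarrow> 'k::comm_ring_1) \<Rightarrow> ('n \<times> 'n \<times> 'n \<Rightarrow> 'k) \<Rightarrow> ('n \<times> 'n \<times> 'n \<Rightarrow> 'k)" where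
  "P23 P X = (\<lambda>(i, j, m). \<Sum>(k, l)\<in>UNIV. P (j, m) (k, l) * X (i, k, l))"

definition op_comm :: "(('a \<Rightarrow> 'k::ab_group_add) \<Rightarrow> ('a \<Rightarrow> 'k)) \<Rightarrow> (('a \<Rightarrow> 'k) \<Rightarrow> ('a \<Rightarrow> 'k)) \<Rightarrow> ('a \<Rightarrow> 'k) \<Rightarrow> ('a \<Rightarrow> 'k)" where
  "op_comm F G X = (\<lambda>x. F (G X) x - G (F X) x)"

definition schouten :: "('n::finite \<times> 'n \<Rightarrow> 'n \<times> 'n \<Rightarrow> 'k::comm_ring_1) \<Rightarrow> ('n \<times> 'n \<times> 'n \<Rightarrow> 'k) \<Rightarrow> ('n \<times> 'n \<times> 'n \<Rightarrow> 'k)" where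
  "schouten P X = (\<lambda>x. op_comm (P12 P) (P13 P) X x + op_comm (P12 P) (P23 P) X x + op_comm (P13 P) (P23 P) X x)"

text \<open>Quadratic pre-Poisson bracket: {x_i, x_j}(v) = sum_{k,l} c i j k l * v_k * v_l,
  with c symmetric in k l (unique symmetric coefficient form) and skew in i j.\<close>
definition quad_prePoisson :: "('n::finite \<Rightarrow> 'n \<Rightarrow> 'n \<Rightarrow> 'n \<Rightarrow> 'k::comm_ring_1) \<Rightarrow> bool" where
  "quad_prePoisson c \<longleftrightarrow> (\<forall>i j k l. c i j k l = c i j l k) \<and> (\<forall>i j k l. c j i k l = - c i j k l)"

definition br_lin :: "('n::finite \<Rightarrow> 'n \<Rightarrow> 'n \<Rightarrow> 'n \<Rightarrow> 'k::comm_ring_1) \<Rightarrow> 'n \<Rightarrow> 'n \<Rightarrow> ('n \<Rightarrow> 'k) \<Rightarrow> 'k" where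
  "br_lin c i j v = (\<Sum>k\<in>UNIV. \<Sum>l\<in>UNIV. c i j k l * v k * v l)"

text \<open>{x_a, {x_b, x_d}}(v), computed with the Leibniz rule
  {x_a, x_k x_l} = {x_a, x_k} x_l + x_k {x_a, x_l}.\<close>
definition br_nested :: "('n::finite \<Rightarrow> 'n \<Rightarrow> 'n \<Rightarrow> 'n \<Rightarrow> 'k::comm_ring_1) \<Rightarrow> 'n \<Rightarrow> 'n \<Rightarrow> 'n \<Rightarrow> ('n \<Rightarrow> 'k) \<Rightarrow> 'k" where
  "br_nested c a b d v = (\<Sum>k\<in>UNIV. \<Sum>l\<in>UNIV. c b d k l * (br_lin c a k v * v l + v k * br_lin c a l v))"

definition jacobi :: "('n::finite \<Rightarrow> 'n \<Rightarrow> 'n \<Rightarrow> 'n \<Rightarrow> 'k::comm_ring_1) \<Rightarrow> bool" where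
  "jacobi c \<longleftrightarrow> (\<forall>a b d v. br_nested c a b d v + br_nested c b d a v + br_nested c d a b v = 0)"

text \<open>delta : Symm(A (x) A) -> A /\ A, dual of delta^*(x_i /\ x_j) = {x_i, x_j}.\<close>
definition delta :: "('n::finite \<Rightarrow> 'n \<Rightarrow> 'n \<Rightarrow> 'n \<Rightarrow> 'k::comm_ring_1) \<Rightarrow> ('n \<times> 'n \<Rightarrow> 'k) \<Rightarrow> ('n \<times> 'n \<Rightarrow> 'k)" where
  "delta c t = (\<lambda>(i, j). \<Sum>k\<in>UNIV. \<Sum>l\<in>UNIV. c i j k l * t (k, l))"

definition extends_delta :: "('n::finite \<Rightarrow> 'n \<Rightarrow> 'n \<Rightarrow> 'n \<Rightarrow> 'k::comm_ring_1) \<Rightarrow> ('n \<times> 'n \<Rightarrow> 'n \<times> 'n \<Rightarrow> 'k) \<Rightarrow> bool" where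
  "extends_delta c D \<longleftrightarrow> (\<forall>t. sym2 t \<longrightarrow> op_apply D t = delta c t)"

end

theory Submission
  imports Defs
begin

(* For fully symmetric X, each of D^12 X, D^13 X, D^23 X only sees D on tensors symmetric in the
   contracted pair, that is, only sees delta. After regrouping
     [[D,D]] X = D^12 (D^13 X + D^23 X) - D^13 (D^12 X - D^23 X) - D^23 (D^12 X + D^13 X)
   each inner tensor is again symmetric in the pair its outer operator contracts (for the middle
   term by skew-symmetry of the bracket), so [[D,D]] X depends on delta alone.
   For the extension whose matrix is the coefficient tensor of the bracket, [[D,D]] (v (x) v (x) v)
   at (a,b,d) is minus the Jacobiator of x_a, x_b, x_d at v. In characteristic zero a linear
   functional vanishing on all cubes v (x) v (x) v vanishes on all symmetric tensors
   (polarization), which gives the Jacobi criterion. *)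

lemma sym3_swap12: "sym3 X \<Longrightarrow> X (i, j, k) = X (j, i, k)"
  unfolding sym3_def by blast

lemma sym3_swap23: "sym3 X \<Longrightarrow> X (i, j, k) = X (i, k, j)"
  unfolding sym3_def by blast

lemma sym3_swap13: "sym3 X \<Longrightarrow> X (i, j, k) = X (k, j, i)"
  unfolding sym3_def by blast

lemma quad_prePoisson_sym: "quad_prePoisson c \<Longrightarrow> c i j k l = c i j l k"
  unfolding quad_prePoisson_def by blast

lemma quad_prePoisson_skew: "quad_prePoisson c \<Longrightarrow> c j i k l = - c i j k l"
  unfolding quad_prePoisson_def by blast

lemma sum_UNIV_pair: "(\<Sum>(k, l)\<in>(UNIV :: ('n::finite \<times> 'n) set). f k l) = (\<Sum>k\<in>UNIV. \<Sum>l\<in>UNIV. f k l)"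
  by (simp add: sum.cartesian_product)

subsection \<open>The partial operators and independence of the extension\<close>

lemma P12_op_apply: "P12 D Y (i, j, m) = op_apply D (\<lambda>(k, l). Y (k, l, m)) (i, j)"
  by (simp add: P12_def op_apply_def split_def)

lemma P13_op_apply: "P13 D Y (i, j, m) = op_apply D (\<lambda>(k, l). Y (k, j, l)) (i, m)"
  by (simp add: P13_def op_apply_def split_def)

lemma P23_op_apply: "P23 D Y (i, j, m) = op_apply D (\<lambda>(k, l). Y (i, k, l)) (j, m)"
  by (simp add: P23_def op_apply_def split_def)

lemma P12_cong_extends_delta:
  assumes "extends_delta c D" "extends_delta c D'" "\<And>a b m. Y (a, b, m) = Y (b, a, m)"
  shows "P12 D Y = P12 D' Y"
  using assms by (auto simp: fun_eq_iff P12_op_apply extends_delta_def sym2_def)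

lemma P13_cong_extends_delta:
  assumes "extends_delta c D" "extends_delta c D'" "\<And>a b m. Y (a, m, b) = Y (b, m, a)"
  shows "P13 D Y = P13 D' Y"
  using assms by (auto simp: fun_eq_iff P13_op_apply extends_delta_def sym2_def)

lemma P23_cong_extends_delta:
  assumes "extends_delta c D" "extends_delta c D'" "\<And>a b m. Y (m, a, b) = Y (m, b, a)"
  shows "P23 D Y = P23 D' Y"
  using assms by (auto simp: fun_eq_iff P23_op_apply extends_delta_def sym2_def)

lemma P12_add: "P12 D (\<lambda>x. Y x + Z x) = (\<lambda>x. P12 D Y x + P12 D Z x)"
  by (auto simp: fun_eq_iff P12_def distrib_left sum.distrib split_def)

lemma P13_diff: "P13 D (\<lambda>x. Y x - Z x) = (\<lambda>x. P13 D Y x - P13 D Z x)"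
  by (auto simp: fun_eq_iff P13_def right_diff_distrib sum_subtractf split_def)

lemma P23_add: "P23 D (\<lambda>x. Y x + Z x) = (\<lambda>x. P23 D Y x + P23 D Z x)"
  by (auto simp: fun_eq_iff P23_def distrib_left sum.distrib split_def)

lemma schouten_regroup:
  "schouten D X = (\<lambda>x. P12 D (\<lambda>y. P13 D X y + P23 D X y) x
                        - P13 D (\<lambda>y. P12 D X y - P23 D X y) x
                        - P23 D (\<lambda>y. P12 D X y + P13 D X y) x)"
  unfolding schouten_def op_comm_def P12_add P13_diff P23_add
  by (simp add: fun_eq_iff algebra_simps)

definition coeff_op ::
  "('n::finite \<Rightarrow> 'n \<Rightarrow> 'n \<Rightarrow> 'n \<Rightarrow> 'k::comm_ring_1) \<Rightarrow> 'n \<times> 'n \<Rightarrow> 'n \<times> 'n \<Rightarrow> 'k" where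
  "coeff_op c p q = c (fst p) (snd p) (fst q) (snd q)"

lemma extends_delta_coeff_op: "extends_delta c (coeff_op c)"
  unfolding extends_delta_def op_apply_def delta_def coeff_op_def
  by (auto simp: fun_eq_iff sum_UNIV_pair[symmetric] split_def)

lemma P12_coeff_op: "P12 (coeff_op c) Y (i, j, m) = (\<Sum>k\<in>UNIV. \<Sum>l\<in>UNIV. c i j k l * Y (k, l, m))"
  by (simp add: P12_def coeff_op_def sum_UNIV_pair[symmetric] split_def)

lemma P13_coeff_op: "P13 (coeff_op c) Y (i, j, m) = (\<Sum>k\<in>UNIV. \<Sum>l\<in>UNIV. c i m k l * Y (k, j, l))"
  by (simp add: P13_def coeff_op_def sum_UNIV_pair[symmetric] split_def)

lemma P23_coeff_op: "P23 (coeff_op c) Y (i, j, m) = (\<Sum>k\<in>UNIV. \<Sum>l\<in>UNIV. c j m k l * Y (i, k, l))"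
  by (simp add: P23_def coeff_op_def sum_UNIV_pair[symmetric] split_def)

lemma P13_coeff_op_eq_P23:
  "sym3 X \<Longrightarrow> P13 (coeff_op c) X (a, b, m) = P23 (coeff_op c) X (b, a, m)"
  unfolding P13_coeff_op P23_coeff_op by (simp add: sym3_swap12[of X _ b])

lemma P12_coeff_op_eq_P13:
  "sym3 X \<Longrightarrow> P12 (coeff_op c) X (m, a, b) = P13 (coeff_op c) X (m, b, a)"
  unfolding P12_coeff_op P13_coeff_op by (simp add: sym3_swap23[of X _ _ b])

lemma P12_coeff_op_eq_neg_P23:
  assumes "quad_prePoisson c" "sym3 X"
  shows "P12 (coeff_op c) X (a, m, b) = - P23 (coeff_op c) X (b, m, a)"
  unfolding P12_coeff_op P23_coeff_op sum_negf[symmetric]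
  using assms by (auto simp: quad_prePoisson_skew[of c m a] intro!: sum.cong)
    (metis sym3_swap12 sym3_swap13)

lemma schouten_eq_schouten_coeff_op:
  assumes D: "extends_delta c D" and c: "quad_prePoisson c" and X: "sym3 X"
  shows "schouten D X = schouten (coeff_op c) X"
proof -
  let ?C = "coeff_op c"
  note C = extends_delta_coeff_op[of c]
  have "P12 D X = P12 ?C X"
    by (rule P12_cong_extends_delta[OF D C]) (rule sym3_swap12[OF X])
  moreover have "P13 D X = P13 ?C X"
    by (rule P13_cong_extends_delta[OF D C]) (rule sym3_swap13[OF X])
  moreover have "P23 D X = P23 ?C X"
    by (rule P23_cong_extends_delta[OF D C]) (rule sym3_swap23[OF X])
  moreover have "P12 D (\<lambda>y. P13 ?C X y + P23 ?C X y) = P12 ?C (\<lambda>y. P13 ?C X y + P23 ?C X y)"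
    by (rule P12_cong_extends_delta[OF D C]) (simp add: P13_coeff_op_eq_P23[OF X] add.commute)
  moreover have "P13 D (\<lambda>y. P12 ?C X y - P23 ?C X y) = P13 ?C (\<lambda>y. P12 ?C X y - P23 ?C X y)"
    by (rule P13_cong_extends_delta[OF D C]) (simp add: P12_coeff_op_eq_neg_P23[OF c X])
  moreover have "P23 D (\<lambda>y. P12 ?C X y + P13 ?C X y) = P23 ?C (\<lambda>y. P12 ?C X y + P13 ?C X y)"
    by (rule P23_cong_extends_delta[OF D C]) (simp add: P12_coeff_op_eq_P13[OF X] add.commute)
  ultimately show ?thesis
    by (simp only: schouten_regroup[of D] schouten_regroup[of ?C])
qed

subsection \<open>The coefficient operator and the Jacobiator\<close>

definition nested_contr ::
  "('n::finite \<Rightarrow> 'n \<Rightarrow> 'n \<Rightarrow> 'n \<Rightarrow> 'k::comm_ring_1) \<Rightarrow> ('n \<times> 'n \<times> 'n \<Rightarrow> 'k) \<Rightarrow> 'n \<Rightarrow> 'n \<Rightarrow> 'n \<Rightarrow> 'k" where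
  "nested_contr c X x y z =
     (\<Sum>k\<in>UNIV. \<Sum>l\<in>UNIV. \<Sum>p\<in>UNIV. \<Sum>q\<in>UNIV. c x y k l * c k z p q * X (p, q, l))"

lemma nested_contr_skew: "quad_prePoisson c \<Longrightarrow> nested_contr c X y x z = - nested_contr c X x y z"
  unfolding nested_contr_def sum_negf[symmetric] by (simp add: quad_prePoisson_skew[of c y x])

lemma schouten_coeff_op:
  assumes c: "quad_prePoisson c" and X: "sym3 X"
  shows "schouten (coeff_op c) X (i, j, m) =
           2 * (nested_contr c X i j m + nested_contr c X j m i + nested_contr c X m i j)"
proof -
  let ?C = "coeff_op c" and ?N = "nested_contr c X"
  note cs = quad_prePoisson_sym[OF c] and sk = quad_prePoisson_skew[OF c]
  note x12 = sym3_swap12[OF X] and x13 = sym3_swap13[OF X] and x23 = sym3_swap23[OF X]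
  have P12_P13: "P12 ?C (P13 ?C X) (i, j, m) = ?N i j m"
    unfolding P12_coeff_op P13_coeff_op nested_contr_def sum_distrib_left
    by (intro sum.cong refl) (metis mult.assoc x23)
  have P13_P12: "P13 ?C (P12 ?C X) (i, j, m) = ?N i m j"
    unfolding P12_coeff_op P13_coeff_op nested_contr_def sum_distrib_left
    by (intro sum.cong refl) (simp add: mult.assoc)
  have P12_P23: "P12 ?C (P23 ?C X) (i, j, m) = ?N i j m"
    unfolding P12_coeff_op P23_coeff_op nested_contr_def sum_distrib_left
    by (rule trans[OF sum.swap], intro sum.cong refl) (metis mult.assoc x12 x13 cs)
  have P23_P12: "P23 ?C (P12 ?C X) (i, j, m) = - ?N j m i"
    unfolding P12_coeff_op P23_coeff_op nested_contr_def sum_distrib_left sum_negf[symmetric]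
    by (intro sum.cong refl) (simp add: sk[of _ i])
  have P13_P23: "P13 ?C (P23 ?C X) (i, j, m) = - ?N i m j"
    unfolding P13_coeff_op P23_coeff_op nested_contr_def sum_distrib_left sum_negf[symmetric]
    by (rule trans[OF sum.swap], intro sum.cong refl) (simp add: sk[of _ j] mult.assoc, metis x12 x23 cs)
  have P23_P13: "P23 ?C (P13 ?C X) (i, j, m) = - ?N j m i"
    unfolding P13_coeff_op P23_coeff_op nested_contr_def sum_distrib_left sum_negf[symmetric]
    by (rule trans[OF sum.swap], intro sum.cong refl) (simp add: sk[of _ i] mult.assoc, metis x12 x23 cs)
  show ?thesis
    unfolding schouten_def op_comm_def
    using P12_P13 P13_P12 P12_P23 P23_P12 P13_P23 P23_P13 nested_contr_skew[OF c, of X i m j]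
    by (simp add: algebra_simps)
qed

definition cube :: "('n \<Rightarrow> 'k::comm_semiring_1) \<Rightarrow> 'n \<times> 'n \<times> 'n \<Rightarrow> 'k" where
  "cube v = (\<lambda>(p, q, r). v p * v q * v r)"

lemma sym3_cube: "sym3 (cube v)"
  unfolding sym3_def cube_def by (simp add: mult_ac)

lemma br_nested_eq_nested_contr:
  assumes c: "quad_prePoisson c"
  shows "br_nested c a b d v = - 2 * nested_contr c (cube v) b d a"
proof -
  have "(\<Sum>k\<in>UNIV. \<Sum>l\<in>UNIV. c b d k l * (v k * br_lin c a l v))
      = (\<Sum>k\<in>UNIV. \<Sum>l\<in>UNIV. c b d k l * (br_lin c a k v * v l))"
    by (rule trans[OF sum.swap], intro sum.cong refl) (simp add: quad_prePoisson_sym[OF c, of b d] mult_ac)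
  then have "br_nested c a b d v = 2 * (\<Sum>k\<in>UNIV. \<Sum>l\<in>UNIV. c b d k l * (br_lin c a k v * v l))"
    unfolding br_nested_def distrib_left sum.distrib by simp
  also have "\<dots> = - 2 * nested_contr c (cube v) b d a"
    unfolding nested_contr_def cube_def br_lin_def sum_distrib_left sum_distrib_right sum_negf[symmetric]
    by (intro sum.cong refl) (simp add: quad_prePoisson_skew[OF c, of _ a] mult_ac)
  finally show ?thesis .
qed

lemma jacobiator_eq_schouten_cube:
  assumes "quad_prePoisson c"
  shows "br_nested c a b d v + br_nested c b d a v + br_nested c d a b v
           = - schouten (coeff_op c) (cube v) (a, b, d)"
  unfolding br_nested_eq_nested_contr[OF assms] schouten_coeff_op[OF assms sym3_cube]
  by (simp add: algebra_simps)

lemma jacobi_iff_schouten_cube: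
  "quad_prePoisson c \<Longrightarrow> jacobi c \<longleftrightarrow> (\<forall>v. schouten (coeff_op c) (cube v) = (\<lambda>_. 0))"
  unfolding jacobi_def by (auto simp: jacobiator_eq_schouten_cube fun_eq_iff)

subsection \<open>Polarization\<close>

definition contract3 :: "('n::finite \<Rightarrow> 'n \<Rightarrow> 'n \<Rightarrow> 'k::comm_ring_1) \<Rightarrow> ('n \<times> 'n \<times> 'n \<Rightarrow> 'k) \<Rightarrow> 'k" where
  "contract3 W X = (\<Sum>p\<in>UNIV. \<Sum>q\<in>UNIV. \<Sum>r\<in>UNIV. W p q r * X (p, q, r))"

definition trilinear_form ::
  "('n::finite \<Rightarrow> 'n \<Rightarrow> 'n \<Rightarrow> 'k::comm_ring_1) \<Rightarrow> ('n \<Rightarrow> 'k) \<Rightarrow> ('n \<Rightarrow> 'k) \<Rightarrow> ('n \<Rightarrow> 'k) \<Rightarrow> 'k" where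
  "trilinear_form W x y z = (\<Sum>p\<in>UNIV. \<Sum>q\<in>UNIV. \<Sum>r\<in>UNIV. W p q r * (x p * y q * z r))"

lemma contract3_cube: "contract3 W (cube v) = trilinear_form W v v v"
  by (simp add: contract3_def trilinear_form_def cube_def)

lemma contract3_add: "contract3 (\<lambda>a b d. W a b d + W' a b d) X = contract3 W X + contract3 W' X"
  unfolding contract3_def distrib_right sum.distrib ..

lemma contract3_mult: "contract3 (\<lambda>a b d. s * W a b d) X = s * contract3 W X"
  unfolding contract3_def sum_distrib_left by (simp add: mult.assoc)

lemma contract3_swap12: "sym3 X \<Longrightarrow> contract3 (\<lambda>a b d. W b a d) X = contract3 W X"
  unfolding contract3_def by (rule trans[OF sum.swap], intro sum.cong refl) (metis sym3_swap12)

lemma contract3_swap23: "sym3 X \<Longrightarrow> contract3 (\<lambda>a b d. W a d b) X = contract3 W X"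
  unfolding contract3_def
  by (rule sum.cong[OF refl], rule trans[OF sum.swap], intro sum.cong refl) (metis sym3_swap23)

lemma trilinear_form_add:
  "trilinear_form W (\<lambda>i. x i + x' i) y z = trilinear_form W x y z + trilinear_form W x' y z"
  "trilinear_form W x (\<lambda>i. y i + y' i) z = trilinear_form W x y z + trilinear_form W x y' z"
  "trilinear_form W x y (\<lambda>i. z i + z' i) = trilinear_form W x y z + trilinear_form W x y z'"
  unfolding trilinear_form_def by (simp_all add: distrib_left distrib_right sum.distrib)

lemma sum_mult_of_bool_eq:
  "(\<Sum>r\<in>(UNIV :: 'n::finite set). f r * of_bool (r = d)) = (f d :: 'k::comm_semiring_1)"
  by simp

lemma trilinear_form_basis:
  "trilinear_form W (\<lambda>i. of_bool (i = a)) (\<lambda>i. of_bool (i = b)) (\<lambda>i. of_bool (i = d)) = W a b d"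
  by (simp only: trilinear_form_def mult.assoc[symmetric] sum_mult_of_bool_eq)

lemma trilinear_form_symmetrization_eq_0:
  assumes "\<And>v. trilinear_form W v v v = 0"
  shows "trilinear_form W x y z + trilinear_form W x z y + trilinear_form W y x z
       + trilinear_form W y z x + trilinear_form W z x y + trilinear_form W z y x = 0"
proof -
  let ?T = "\<lambda>v. trilinear_form W v v v"
  have "?T (\<lambda>i. x i + y i + z i) - ?T (\<lambda>i. x i + y i) - ?T (\<lambda>i. x i + z i) - ?T (\<lambda>i. y i + z i)
          + ?T x + ?T y + ?T z
        = trilinear_form W x y z + trilinear_form W x z y + trilinear_form W y x z
          + trilinear_form W y z x + trilinear_form W z x y + trilinear_form W z y x"
    unfolding trilinear_form_add by (simp add: algebra_simps)
  then show ?thesis by (simp add: assms)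
qed

lemma contract3_eq_0_if_cubes:
  fixes W :: "'n::finite \<Rightarrow> 'n \<Rightarrow> 'n \<Rightarrow> 'k::field_char_0"
  assumes cubes: "\<And>v. contract3 W (cube v) = 0" and X: "sym3 X"
  shows "contract3 W X = 0"
proof -
  let ?S = "\<lambda>a b d. W a b d + W a d b + W b a d + W b d a + W d a b + W d b a"
  have "?S a b d = 0" for a b d
    using trilinear_form_symmetrization_eq_0[of W "\<lambda>i. of_bool (i = a)" "\<lambda>i. of_bool (i = b)"
        "\<lambda>i. of_bool (i = d)"] cubes
    by (simp add: contract3_cube trilinear_form_basis)
  then have "contract3 ?S X = 0"
    by (simp add: contract3_def)
  moreover have "contract3 ?S X = 6 * contract3 W X"
  proof -
    note swap12 = contract3_swap12[OF X] and swap23 = contract3_swap23[OF X]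
    have "contract3 (\<lambda>a b d. W a d b) X = contract3 W X"
      by (rule swap23)
    moreover have "contract3 (\<lambda>a b d. W b a d) X = contract3 W X"
      by (rule swap12)
    moreover have "contract3 (\<lambda>a b d. W b d a) X = contract3 W X"
      using swap12[of "\<lambda>a b d. W a d b"] swap23 by simp
    moreover have "contract3 (\<lambda>a b d. W d a b) X = contract3 W X"
      using swap23[of "\<lambda>a b d. W b a d"] swap12 by simp
    moreover have "contract3 (\<lambda>a b d. W d b a) X = contract3 W X"
      using swap12[of "\<lambda>a b d. W d a b"] swap23[of "\<lambda>a b d. W b a d"] swap12 by simp
    ultimately show ?thesis
      unfolding contract3_add by simp
  qed
  ultimately show ?thesis by simp
qed

lemma sum_UNIV_reorder4:
  "(\<Sum>k\<in>UNIV. \<Sum>l\<in>UNIV. \<Sum>p\<in>UNIV. \<Sum>q\<in>UNIV. f k l p q)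
     = (\<Sum>p\<in>UNIV. \<Sum>q\<in>UNIV. \<Sum>l\<in>UNIV. \<Sum>k\<in>(UNIV :: 'n::finite set). f k l p q :: 'k::comm_monoid_add)"
proof -
  have "(\<Sum>k\<in>UNIV. \<Sum>l\<in>UNIV. \<Sum>p\<in>UNIV. \<Sum>q\<in>UNIV. f k l p q)
      = (\<Sum>k\<in>UNIV. \<Sum>p\<in>UNIV. \<Sum>q\<in>UNIV. \<Sum>l\<in>UNIV. f k l p q)"
    by (rule sum.cong[OF refl], rule trans[OF sum.swap], rule sum.cong[OF refl], rule sum.swap)
  also have "\<dots> = (\<Sum>p\<in>UNIV. \<Sum>q\<in>UNIV. \<Sum>k\<in>UNIV. \<Sum>l\<in>UNIV. f k l p q)"
    by (rule trans[OF sum.swap], rule sum.cong[OF refl], rule sum.swap)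
  also have "\<dots> = (\<Sum>p\<in>UNIV. \<Sum>q\<in>UNIV. \<Sum>l\<in>UNIV. \<Sum>k\<in>UNIV. f k l p q)"
    by (intro sum.cong[OF refl], rule sum.swap)
  finally show ?thesis .
qed

lemma nested_contr_eq_contract3:
  "nested_contr c X x y z = contract3 (\<lambda>p q r. \<Sum>k\<in>UNIV. c x y k r * c k z p q) X"
  unfolding nested_contr_def contract3_def sum_distrib_right by (rule sum_UNIV_reorder4)

lemma schouten_coeff_op_eq_contract3:
  assumes "quad_prePoisson c"
  shows "\<exists>W. \<forall>X. sym3 X \<longrightarrow> schouten (coeff_op c) X x = contract3 W X"
proof -
  obtain i j m where x: "x = (i, j, m)"
    by (cases x) auto
  let ?K = "\<lambda>a b d p q r. \<Sum>k\<in>UNIV. c a b k r * c k d p q"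
  have "schouten (coeff_op c) X x
          = contract3 (\<lambda>p q r. 2 * (?K i j m p q r + ?K j m i p q r + ?K m i j p q r)) X"
    if "sym3 X" for X
    unfolding x schouten_coeff_op[OF assms that] contract3_mult contract3_add nested_contr_eq_contract3 ..
  then show ?thesis by blast
qed

lemma schouten_coeff_op_vanishes_iff_cubes:
  fixes c :: "'n::finite \<Rightarrow> 'n \<Rightarrow> 'n \<Rightarrow> 'n \<Rightarrow> 'k::field_char_0"
  assumes c: "quad_prePoisson c"
  shows "(\<forall>X. sym3 X \<longrightarrow> schouten (coeff_op c) X = (\<lambda>_. 0))
           \<longleftrightarrow> (\<forall>v. schouten (coeff_op c) (cube v) = (\<lambda>_. 0))"
proof (intro iffI allI impI ext)
  fix v x
  assume "\<forall>X. sym3 X \<longrightarrow> schouten (coeff_op c) X = (\<lambda>_. 0)"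
  then show "schouten (coeff_op c) (cube v) x = 0"
    using sym3_cube by metis
next
  fix X :: "'n \<times> 'n \<times> 'n \<Rightarrow> 'k" and x
  assume cubes: "\<forall>v. schouten (coeff_op c) (cube v) = (\<lambda>_. 0)" and X: "sym3 X"
  obtain W where W: "\<And>Y. sym3 Y \<Longrightarrow> schouten (coeff_op c) Y x = contract3 W Y"
    using schouten_coeff_op_eq_contract3[OF c] by blast
  have "contract3 W X = 0"
    using contract3_eq_0_if_cubes[OF _ X] cubes W[OF sym3_cube] by simp
  then show "schouten (coeff_op c) X x = 0"
    using W[OF X] by simp
qed

theorem theorem2:
  fixes mu :: "'n::finite \<Rightarrow> 'n \<Rightarrow> 'n \<Rightarrow> 'k::real_normed_field"
    and c :: "'n \<Rightarrow> 'n \<Rightarrow> 'n \<Rightarrow> 'n \<Rightarrow> 'k"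
  assumes "assoc_alg mu"
    and "quad_prePoisson c"
  shows "(\<forall>D1 D2. extends_delta c D1 \<and> extends_delta c D2 \<longrightarrow>
            (\<forall>X. sym3 X \<longrightarrow> schouten D1 X = schouten D2 X))
       \<and> (\<forall>D. extends_delta c D \<longrightarrow>
            (jacobi c \<longleftrightarrow> (\<forall>X. sym3 X \<longrightarrow> schouten D X = (\<lambda>_. 0))))"
proof -
  have canonical: "schouten D X = schouten (coeff_op c) X" if "extends_delta c D" "sym3 X" for D X
    using schouten_eq_schouten_coeff_op[OF that(1) assms(2) that(2)] .
  have "jacobi c \<longleftrightarrow> (\<forall>X. sym3 X \<longrightarrow> schouten (coeff_op c) X = (\<lambda>_. 0))"
    using jacobi_iff_schouten_cube[OF assms(2)] schouten_coeff_op_vanishes_iff_cubes[OF assms(2)]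
    by simp
  then show ?thesis
    using canonical by auto
qed

end
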